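(* Let $f:\mathbb{R}^d\to\mathbb{R}$, let $p_u:\mathbb{R}^d\to[0,\infty)$, and let $q_+,q_-$ be probability density functions on $\mathbb{R}^d$. Let $n_+,n_-\ge1$ be integers and let $\boldsymbol{x}_{1+},\dots,\boldsymbol{x}_{n_++}$ and $\boldsymbol{x}_{1-},\dots,\boldsymbol{x}_{n_--}$ be points with $q_+(\boldsymbol{x}_{i+})>0$ and $q_-(\boldsymbol{x}_{i-})>0$ (e.g. samples drawn from $q_+$ and $q_-$ respectively). Write $S_+=\{\boldsymbol{x}_{i+}: 1\le i\le n_+\}$, $S_-=\{\boldsymbol{x}_{i-}:1\le i\le n_-\}$, and define for $\mu\in\mathbb{R}$ $$\Psi_{n_+,n_-}(\mu)=\frac1{n_+}\sum_{i=1}^{n_+}\frac{(f(\boldsymbol{x}_{i+})-\mu)_+p_u(\boldsymbol{x}_{i+})}{q_+(\boldsymbol{x}_{i+})}-\frac1{n_-}\sum_{i=1}^{n_-}\frac{(f(\boldsymbol{x}_{i-})-\mu)_-p_u(\boldsymbol{x}_{i-})}{q_-(\boldsymbol{x}_{i-})}.$$ Assume that $\max_{\boldsymbol{x}\in S_+}p_u(\boldsymbol{x})>0$ and $\max_{\boldsymbol{x}\in S_-}p_u(\boldsymbol{x})>0$. Then there exists $\hat\mu\in\mathbb{R}$ with $\Psi_{n_+,n_-}(\hat\mu)=0$. Moreover, let $\overline{f}=\max\{f(\boldsymbol{x}): \boldsymbol{x}\in S_+,\ p_u(\boldsymbol{x})>0\}$ and $\underline{f}=\min\{f(\boldsymbol{x}):\boldsymbol{x}\in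 S_-,\ p_u(\boldsymbol{x})>0\}$. If $\overline{f}>\underline{f}$, then there is at most one solution $\mu$ of $\Psi_{n_+,n_-}(\mu)=0$.
   Context: For $a\in\mathbb{R}$, $(a)_+=\max(a,0)$ and $(a)_-=\max(-a,0)$, so $a=(a)_+-(a)_-$. Here $p_u$ plays the role of an unnormalized probability density. *)

theory Defs
  imports "HOL-Analysis.Analysis"
begin

definition pos_part :: "real \<Rightarrow> real" where
  "pos_part a = max a 0"

definition neg_part :: "real \<Rightarrow> real" where
  "neg_part a = max (- a) 0"

definition prob_density :: "('a::euclidean_space \<Rightarrow> real) \<Rightarrow> bool" where
  "prob_density q \<longleftrightarrow> (\<forall>x. 0 \<le> q x) \<and> q \<in> borel_measurable lborel \<and>
     (\<integral>\<^sup>+ x. ennreal (q x) \<partial>lborel) = 1"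

definition Psi :: "('a \<Rightarrow> real) \<Rightarrow> ('a \<Rightarrow> real) \<Rightarrow> ('a \<Rightarrow> real) \<Rightarrow> ('a \<Rightarrow> real)
    \<Rightarrow> nat \<Rightarrow> nat \<Rightarrow> (nat \<Rightarrow> 'a) \<Rightarrow> (nat \<Rightarrow> 'a) \<Rightarrow> real \<Rightarrow> real" where
  "Psi f pu qp qm np nm xp xm \<mu> =
     (1 / real np) * (\<Sum>i=1..np. pos_part (f (xp i) - \<mu>) * pu (xp i) / qp (xp i))
   - (1 / real nm) * (\<Sum>i=1..nm. neg_part (f (xm i) - \<mu>) * pu (xm i) / qm (xm i))"

end

theory Submission
  imports Defs
begin

text \<open>
  After absorbing the importance weights \<open>pu x / q x\<close> (nonnegative, since the
  densities are positive at the samples), \<open>Psi\<close> is a weighted total excess of the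
  positive sample values over \<open>\<mu>\<close> minus a weighted total shortfall of the negative
  sample values below \<open>\<mu>\<close>. Both are continuous and piecewise linear in \<open>\<mu>\<close>; the
  first is nonincreasing and vanishes for large \<open>\<mu>\<close>, the second is nondecreasing and
  vanishes for small \<open>\<mu>\<close>, so a root exists by the intermediate value theorem.
  If a positive-weight positive sample lies strictly above a positive-weight negative
  sample, then at every \<open>\<mu>\<close> one of the two terms is strictly monotone, so \<open>Psi\<close> is
  strictly decreasing and its root is unique.
\<close>

definition excess :: "'i set \<Rightarrow> ('i \<Rightarrow> real) \<Rightarrow> ('i \<Rightarrow> real) \<Rightarrow> real \<Rightarrow> real" where
  "excess I w g \<mu> = (\<Sum>i\<in>I. pos_part (g i - \<mu>) * w i)"

definition shortfall :: "'i set \<Rightarrow> ('i \<Rightarrow> real) \<Rightarrow> ('i \<Rightarrow> real) \<Rightarrow> real \<Rightarrow> real" where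
  "shortfall I w g \<mu> = (\<Sum>i\<in>I. neg_part (g i - \<mu>) * w i)"

lemma isCont_excess: "isCont (excess I w g) \<mu>"
  unfolding excess_def pos_part_def by (intro continuous_intros)

lemma isCont_shortfall: "isCont (shortfall I w g) \<mu>"
  unfolding shortfall_def neg_part_def by (intro continuous_intros)

lemma excess_nonneg: "(\<And>i. i \<in> I \<Longrightarrow> 0 \<le> w i) \<Longrightarrow> 0 \<le> excess I w g \<mu>"
  unfolding excess_def pos_part_def by (intro sum_nonneg) auto

lemma shortfall_nonneg: "(\<And>i. i \<in> I \<Longrightarrow> 0 \<le> w i) \<Longrightarrow> 0 \<le> shortfall I w g \<mu>"
  unfolding shortfall_def neg_part_def by (intro sum_nonneg) auto

lemma excess_eq_0: "(\<And>i. i \<in> I \<Longrightarrow> g i \<le> \<mu>) \<Longrightarrow> excess I w g \<mu> = 0"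
  unfolding excess_def pos_part_def by (intro sum.neutral) auto

lemma shortfall_eq_0: "(\<And>i. i \<in> I \<Longrightarrow> \<mu> \<le> g i) \<Longrightarrow> shortfall I w g \<mu> = 0"
  unfolding shortfall_def neg_part_def by (intro sum.neutral) auto

lemma excess_antimono:
  assumes "\<And>i. i \<in> I \<Longrightarrow> 0 \<le> w i" and "\<mu>1 \<le> \<mu>2"
  shows "excess I w g \<mu>2 \<le> excess I w g \<mu>1"
  unfolding excess_def using assms
  by (intro sum_mono mult_right_mono) (auto simp: pos_part_def)

lemma shortfall_mono:
  assumes "\<And>i. i \<in> I \<Longrightarrow> 0 \<le> w i" and "\<mu>1 \<le> \<mu>2"
  shows "shortfall I w g \<mu>1 \<le> shortfall I w g \<mu>2"
  unfolding shortfall_def using assms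
  by (intro sum_mono mult_right_mono) (auto simp: neg_part_def)

lemma excess_strict_antimono:
  assumes "finite I" and "\<And>i. i \<in> I \<Longrightarrow> 0 \<le> w i"
    and "k \<in> I" and "0 < w k" and "\<mu>1 < g k" and "\<mu>1 < \<mu>2"
  shows "excess I w g \<mu>2 < excess I w g \<mu>1"
  unfolding excess_def
proof (rule sum_strict_mono_ex1)
  show "\<forall>i\<in>I. pos_part (g i - \<mu>2) * w i \<le> pos_part (g i - \<mu>1) * w i"
    using assms by (auto intro!: mult_right_mono simp: pos_part_def)
  show "\<exists>i\<in>I. pos_part (g i - \<mu>2) * w i < pos_part (g i - \<mu>1) * w i"
    using assms by (intro bexI[of _ k]) (auto simp: pos_part_def)
qed fact

lemma shortfall_strict_mono:
  assumes "finite I" and "\<And>i. i \<in> I \<Longrightarrow> 0 \<le> w i"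
    and "k \<in> I" and "0 < w k" and "g k < \<mu>2" and "\<mu>1 < \<mu>2"
  shows "shortfall I w g \<mu>1 < shortfall I w g \<mu>2"
  unfolding shortfall_def
proof (rule sum_strict_mono_ex1)
  show "\<forall>i\<in>I. neg_part (g i - \<mu>1) * w i \<le> neg_part (g i - \<mu>2) * w i"
    using assms by (auto intro!: mult_right_mono simp: neg_part_def)
  show "\<exists>i\<in>I. neg_part (g i - \<mu>1) * w i < neg_part (g i - \<mu>2) * w i"
    using assms by (intro bexI[of _ k]) (auto simp: neg_part_def)
qed fact

lemma excess_minus_shortfall_has_root:
  assumes "finite I" "finite J"
    and "\<And>i. i \<in> I \<Longrightarrow> 0 \<le> w i" "\<And>j. j \<in> J \<Longrightarrow> 0 \<le> v j"
    and "0 \<le> c" "0 \<le> d"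
  shows "\<exists>\<mu>. c * excess I w g \<mu> - d * shortfall J v h \<mu> = 0"
proof -
  let ?D = "\<lambda>\<mu>. c * excess I w g \<mu> - d * shortfall J v h \<mu>"
  obtain B where B: "\<And>y. y \<in> g ` I \<union> h ` J \<Longrightarrow> \<bar>y\<bar> \<le> B"
    using finite_imp_bounded[of "g ` I \<union> h ` J"] assms(1,2) by (auto simp: bounded_real)
  have "shortfall J v h (- \<bar>B\<bar>) = 0"
    using B by (intro shortfall_eq_0) force
  with assms have "0 \<le> ?D (- \<bar>B\<bar>)"
    by (simp add: excess_nonneg)
  moreover have "excess I w g \<bar>B\<bar> = 0"
    using B by (intro excess_eq_0) force
  with assms have "?D \<bar>B\<bar> \<le> 0"
    by (simp add: shortfall_nonneg)
  moreover have "isCont ?D \<mu>" for \<mu>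
    by (intro continuous_intros isCont_excess isCont_shortfall)
  ultimately show ?thesis
    using IVT2[of ?D "\<bar>B\<bar>" 0 "- \<bar>B\<bar>"] by auto
qed

lemma excess_minus_shortfall_strict_antimono:
  assumes "finite I" "finite J"
    and "\<And>i. i \<in> I \<Longrightarrow> 0 \<le> w i" "\<And>j. j \<in> J \<Longrightarrow> 0 \<le> v j"
    and "0 < c" "0 < d"
    and "k \<in> I" "0 < w k" "l \<in> J" "0 < v l" "h l < g k"
    and "\<mu>1 < \<mu>2"
  shows "c * excess I w g \<mu>2 - d * shortfall J v h \<mu>2
       < c * excess I w g \<mu>1 - d * shortfall J v h \<mu>1"
proof (cases "\<mu>1 < g k")
  case True
  then have "excess I w g \<mu>2 < excess I w g \<mu>1"
    using assms by (intro excess_strict_antimono) auto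
  moreover have "shortfall J v h \<mu>1 \<le> shortfall J v h \<mu>2"
    using assms by (intro shortfall_mono) auto
  ultimately show ?thesis
    using assms(5,6) by (smt (verit) mult_left_mono mult_strict_left_mono)
next
  case False
  then have "shortfall J v h \<mu>1 < shortfall J v h \<mu>2"
    using assms by (intro shortfall_strict_mono) auto
  moreover have "excess I w g \<mu>2 \<le> excess I w g \<mu>1"
    using assms by (intro excess_antimono) auto
  ultimately show ?thesis
    using assms(5,6) by (smt (verit) mult_left_mono mult_strict_left_mono)
qed

lemma Psi_eq_excess_minus_shortfall:
  "Psi f pu qp qm np nm xp xm \<mu> =
     1 / real np * excess {1..np} (\<lambda>i. pu (xp i) / qp (xp i)) (f \<circ> xp) \<mu>
   - 1 / real nm * shortfall {1..nm} (\<lambda>i. pu (xm i) / qm (xm i)) (f \<circ> xm) \<mu>"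
  unfolding Psi_def excess_def shortfall_def by (simp add: times_divide_eq_right)

theorem proposition1:
  fixes f pu qp qm :: "real ^ 'd \<Rightarrow> real"
    and np nm :: nat
    and xp xm :: "nat \<Rightarrow> real ^ 'd"
  assumes pu_nonneg: "\<forall>x. 0 \<le> pu x"
    and qp_dens: "prob_density qp" and qm_dens: "prob_density qm"
    and np_ge: "np \<ge> 1" and nm_ge: "nm \<ge> 1"
    and qp_pos: "\<forall>i\<in>{1..np}. qp (xp i) > 0"
    and qm_pos: "\<forall>i\<in>{1..nm}. qm (xm i) > 0"
    and max_p: "Max (pu ` (xp ` {1..np})) > 0"
    and max_m: "Max (pu ` (xm ` {1..nm})) > 0"
  shows "(\<exists>\<mu>. Psi f pu qp qm np nm xp xm \<mu> = 0) \<and>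
         (Max (f ` {x \<in> xp ` {1..np}. pu x > 0}) > Min (f ` {x \<in> xm ` {1..nm}. pu x > 0}) \<longrightarrow>
            (\<forall>\<mu>1 \<mu>2. Psi f pu qp qm np nm xp xm \<mu>1 = 0 \<and> Psi f pu qp qm np nm xp xm \<mu>2 = 0
                \<longrightarrow> \<mu>1 = \<mu>2))"
proof
  let ?wp = "\<lambda>i. pu (xp i) / qp (xp i)" and ?wm = "\<lambda>i. pu (xm i) / qm (xm i)"
  have wp_nonneg: "0 \<le> ?wp i" if "i \<in> {1..np}" for i
    using pu_nonneg qp_pos that by (simp add: less_imp_le)
  have wm_nonneg: "0 \<le> ?wm i" if "i \<in> {1..nm}" for i
    using pu_nonneg qm_pos that by (simp add: less_imp_le)
  show "\<exists>\<mu>. Psi f pu qp qm np nm xp xm \<mu> = 0"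
    unfolding Psi_eq_excess_minus_shortfall
    using wp_nonneg wm_nonneg by (intro excess_minus_shortfall_has_root) auto
  let ?Sp = "{x \<in> xp ` {1..np}. pu x > 0}" and ?Sm = "{x \<in> xm ` {1..nm}. pu x > 0}"
  have "?Sp \<noteq> {}" "?Sm \<noteq> {}"
    using max_p max_m np_ge nm_ge by (auto simp: Max_gr_iff)
  then have separated_iff: "Min (f ` ?Sm) < Max (f ` ?Sp) \<longleftrightarrow> (\<exists>x\<in>?Sp. \<exists>y\<in>?Sm. f y < f x)"
    by (auto simp: Max_gr_iff Min_less_iff)
  show "Max (f ` ?Sp) > Min (f ` ?Sm) \<longrightarrow> (\<forall>\<mu>1 \<mu>2. Psi f pu qp qm np nm xp xm \<mu>1 = 0 \<and>
          Psi f pu qp qm np nm xp xm \<mu>2 = 0 \<longrightarrow> \<mu>1 = \<mu>2)"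
  proof (intro impI allI)
    fix \<mu>1 \<mu>2
    assume "Max (f ` ?Sp) > Min (f ` ?Sm)"
    then obtain k l where "k \<in> {1..np}" "0 < pu (xp k)" "l \<in> {1..nm}" "0 < pu (xm l)"
      "f (xm l) < f (xp k)"
      using separated_iff by auto
    then have "Psi f pu qp qm np nm xp xm \<nu>2 < Psi f pu qp qm np nm xp xm \<nu>1"
      if "\<nu>1 < \<nu>2" for \<nu>1 \<nu>2
      unfolding Psi_eq_excess_minus_shortfall
      using that np_ge nm_ge qp_pos qm_pos wp_nonneg wm_nonneg
      by (intro excess_minus_shortfall_strict_antimono[where k = k and l = l]) auto
    moreover assume "Psi f pu qp qm np nm xp xm \<mu>1 = 0 \<and> Psi f pu qp qm np nm xp xm \<mu>2 = 0"
    ultimately show "\<mu>1 = \<mu>2"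
      by (metis less_irrefl linorder_cases)
  qed
qed

end
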